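(* Let $K\ge2$ and $b\in\mathbb{R}$. The operator $A+B$ on $\ell^2(\mathcal{C})$ has only pure point spectrum, and $\ell^2(\mathcal{C})$ has an orthonormal basis of eigenfunctions of $A+B$ that are compactly (finitely) supported.
   Context: The canopy graph $\mathcal{C}$: starting from an infinite outermost layer $\partial\mathcal{C}$, each layer is partitioned into sets of $K$ elements, the elements of each set being joined to a common vertex of the next layer, recursively for infinitely many layers. $A$ is the adjacency operator of $\mathcal{C}$, $(A\psi)(x)=\sum_{y:\mathrm{dist}(x,y)=1}\psi(y)$, and $B$ is multiplication by the constant $b$ on $\partial\mathcal{C}$ and by $0$ elsewhere. *)

theory Defs
  imports "HOL-Analysis.Analysis"
begin

text \<open>Vertices are pairs (n, j) :: nat \<times> nat,
  where n is the layer (n = 0 is the outermost layer, the boundary) and j indexes the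
  (countably infinitely many) vertices of that layer.\<close>

type_synonym canopy_vertex = "nat \<times> nat"

definition canopy_parent :: "nat \<Rightarrow> canopy_vertex \<Rightarrow> canopy_vertex" where
  "canopy_parent K x = (Suc (fst x), snd x div K)"

definition canopy_adj :: "nat \<Rightarrow> canopy_vertex \<Rightarrow> canopy_vertex \<Rightarrow> bool" where
  "canopy_adj K x y \<longleftrightarrow> y = canopy_parent K x \<or> x = canopy_parent K y"

definition canopy_boundary :: "canopy_vertex set" where
  "canopy_boundary = {x. fst x = 0}"

definition canopy_A :: "nat \<Rightarrow> (canopy_vertex \<Rightarrow> complex) \<Rightarrow> canopy_vertex \<Rightarrow> complex" where
  "canopy_A K \<psi> x = (\<Sum>y\<in>{y. canopy_adj K x y}. \<psi> y)"

definition canopy_B :: "real \<Rightarrow> (canopy_vertex \<Rightarrow> complex) \<Rightarrow> canopy_vertex \<Rightarrow> complex" where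
  "canopy_B b \<psi> x = (if x \<in> canopy_boundary then complex_of_real b * \<psi> x else 0)"

definition canopy_H :: "nat \<Rightarrow> real \<Rightarrow> (canopy_vertex \<Rightarrow> complex) \<Rightarrow> canopy_vertex \<Rightarrow> complex" where
  "canopy_H K b \<psi> x = canopy_A K \<psi> x + canopy_B b \<psi> x"

definition l2 :: "('v \<Rightarrow> complex) set" where
  "l2 = {\<psi>. (\<lambda>x. (cmod (\<psi> x))^2) summable_on UNIV}"

definition l2_inner :: "('v \<Rightarrow> complex) \<Rightarrow> ('v \<Rightarrow> complex) \<Rightarrow> complex" where
  "l2_inner \<phi> \<psi> = (\<Sum>\<^sub>\<infinity>x. cnj (\<phi> x) * \<psi> x)"

definition is_eigenfunction :: "(('v \<Rightarrow> complex) \<Rightarrow> 'v \<Rightarrow> complex) \<Rightarrow> ('v \<Rightarrow> complex) \<Rightarrow> bool" where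
  "is_eigenfunction H \<phi> \<longleftrightarrow> \<phi> \<in> l2 \<and> \<phi> \<noteq> (\<lambda>_. 0) \<and> (\<exists>c. H \<phi> = (\<lambda>x. c * \<phi> x))"

text \<open>Pure point spectrum: the eigenvectors are total in l^2 (the point spectral subspace is everything).\<close>
definition pure_point_spectrum :: "(('v \<Rightarrow> complex) \<Rightarrow> 'v \<Rightarrow> complex) \<Rightarrow> bool" where
  "pure_point_spectrum H \<longleftrightarrow>
     (\<forall>\<psi>\<in>l2. (\<forall>\<phi>. is_eigenfunction H \<phi> \<longrightarrow> l2_inner \<phi> \<psi> = 0) \<longrightarrow> \<psi> = (\<lambda>_. 0))"

definition orthonormal_basis_l2 :: "('v \<Rightarrow> complex) set \<Rightarrow> bool" where
  "orthonormal_basis_l2 E \<longleftrightarrow> E \<subseteq> l2 \<and>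
     (\<forall>\<phi>\<in>E. \<forall>\<psi>\<in>E. l2_inner \<phi> \<psi> = (if \<phi> = \<psi> then 1 else 0)) \<and>
     (\<forall>\<psi>\<in>l2. (\<forall>\<phi>\<in>E. l2_inner \<phi> \<psi> = 0) \<longrightarrow> \<psi> = (\<lambda>_. 0))"

end

theory Submission
  imports Defs "HOL-Computational_Algebra.Fundamental_Theorem_Algebra"
begin

text \<open>Below a vertex \<open>(m, j)\<close> with \<open>m \<ge> 1\<close> hang \<open>K\<close> subtrees. Let \<open>P\<^sub>0 = 1\<close>, \<open>P\<^sub>1 = z - b\<close>,
  \<open>P\<^bsub>n+2\<^esub> = z P\<^bsub>n+1\<^esub> - K P\<^sub>n\<close>, let \<open>\<lambda>\<close> be a root of \<open>P\<^sub>m\<close> and \<open>\<omega>\<close> a primitive \<open>K\<close>-th root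
  of unity. For \<open>0 < s < K\<close>, the function equal to \<open>\<omega>\<^sup>s\<^sup>r P\<^sub>i(\<lambda>)\<close> on layer \<open>i\<close> of the \<open>r\<close>-th
  subtree and \<open>0\<close> elsewhere is an eigenfunction of \<open>A + B\<close> with eigenvalue \<open>\<lambda>\<close>: inside the subtrees
  the eigenvalue equation is the three-term recurrence (with the boundary potential \<open>b\<close> giving \<open>P\<^sub>1\<close>),
  and at \<open>(m, j)\<close> the phases cancel. A Christoffel-Darboux identity shows that \<open>P\<^sub>m\<close> has \<open>m\<close>
  simple real roots and that the eigenfunctions are mutually orthogonal. They are complete: if
  \<open>\<psi> \<in> \<ell>\<^sup>2\<close> is orthogonal to all of them, then the sums of \<open>\<psi>\<close> over the descendants in a fixed layer
  of sibling vertices agree (the matrix \<open>(P\<^sub>i(\<lambda>))\<close> over the roots \<open>\<lambda>\<close> of \<open>P\<^sub>m\<close> is invertible, and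
  discrete Fourier inversion applies), so \<open>\<psi>\<close> is constant on every layer, hence zero.\<close>

section \<open>Square-summable functions\<close>

lemma l2_finite_support:
  assumes "finite F" "\<And>x. x \<notin> F \<Longrightarrow> \<phi> x = 0"
  shows "\<phi> \<in> l2"
proof -
  have "(\<lambda>x. (cmod (\<phi> x))\<^sup>2) summable_on F"
    using assms(1) by simp
  then have "(\<lambda>x. (cmod (\<phi> x))\<^sup>2) summable_on UNIV"
    by (rule summable_on_cong_neutral[THEN iffD1, rotated -1]) (use assms(2) in auto)
  then show ?thesis
    by (simp add: l2_def)
qed

lemma l2_inner_finite_support:
  assumes "finite F" "\<And>x. x \<notin> F \<Longrightarrow> \<phi> x = 0"
  shows "l2_inner \<phi> \<psi> = (\<Sum>x\<in>F. cnj (\<phi> x) * \<psi> x)"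
proof -
  have "l2_inner \<phi> \<psi> = infsum (\<lambda>x. cnj (\<phi> x) * \<psi> x) F"
    unfolding l2_inner_def by (rule infsum_cong_neutral) (use assms(2) in auto)
  then show ?thesis
    using assms(1) by simp
qed

lemma l2_inner_commute: "l2_inner \<psi> \<phi> = cnj (l2_inner \<phi> \<psi>)"
  by (simp add: l2_inner_def mult.commute flip: infsum_cnj)

lemma l2_constant_on_infinite:
  assumes "\<psi> \<in> l2" "infinite S" "\<And>x. x \<in> S \<Longrightarrow> \<psi> x = c"
  shows "c = 0"
proof (rule ccontr)
  assume "c \<noteq> 0"
  let ?g = "\<lambda>x. (cmod (\<psi> x))\<^sup>2"
  have summable: "?g summable_on UNIV"
    using assms(1) by (simp add: l2_def)
  have "real n * (cmod c)\<^sup>2 \<le> infsum ?g UNIV" for n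
  proof -
    obtain T where T: "T \<subseteq> S" "finite T" "card T = n"
      using infinite_arbitrarily_large[OF assms(2)] by blast
    then have "real n * (cmod c)\<^sup>2 = infsum ?g T"
      using assms(3) by (simp add: subset_iff)
    also have "\<dots> \<le> infsum ?g UNIV"
      using summable T(2) by (intro infsum_mono_neutral) auto
    finally show ?thesis .
  qed
  moreover obtain n where "infsum ?g UNIV < real n * (cmod c)\<^sup>2"
    using reals_Archimedean3[of "(cmod c)\<^sup>2"] \<open>c \<noteq> 0\<close> by auto
  ultimately show False
    by (meson not_le)
qed

lemma l2_inner_cmult_left: "l2_inner (\<lambda>x. c * \<phi> x) \<psi> = cnj c * l2_inner \<phi> \<psi>"
  unfolding l2_inner_def by (simp add: mult.assoc flip: infsum_cmult_right')

lemma l2_inner_cmult_right: "l2_inner \<phi> (\<lambda>x. c * \<psi> x) = c * l2_inner \<phi> \<psi>"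
  unfolding l2_inner_def by (simp add: mult.left_commute flip: infsum_cmult_right')

section \<open>The polynomials \<open>P\<^sub>n\<close>\<close>

fun canopy_poly :: "nat \<Rightarrow> real \<Rightarrow> nat \<Rightarrow> complex poly" where
  "canopy_poly K b 0 = 1"
| "canopy_poly K b (Suc 0) = [:- complex_of_real b, 1:]"
| "canopy_poly K b (Suc (Suc n)) =
     [:0, 1:] * canopy_poly K b (Suc n) - smult (of_nat K) (canopy_poly K b n)"

lemma coeff_canopy_poly: "coeff (canopy_poly K b n) n = 1 \<and> (\<forall>k>n. coeff (canopy_poly K b n) k = 0)"
proof (induction K b n rule: canopy_poly.induct)
  case (3 K b n)
  then show ?case by (auto simp: coeff_pCons split: nat.splits)
qed (auto simp: coeff_pCons split: nat.splits)

lemma degree_canopy_poly [simp]: "degree (canopy_poly K b n) = n"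
  using coeff_canopy_poly[of K b n] by (metis le_degree degree_le le_antisym not_le zero_neq_one)

lemma canopy_poly_root_pos: "poly (canopy_poly K b m) z = 0 \<Longrightarrow> 0 < m"
  by (cases m) auto

lemma poly_canopy_poly_cnj: "poly (canopy_poly K b n) (cnj z) = cnj (poly (canopy_poly K b n) z)"
  by (induction K b n rule: canopy_poly.induct) auto

lemma poly_canopy_poly_of_real_cnj [simp]:
  "cnj (poly (canopy_poly K b n) (of_real x)) = poly (canopy_poly K b n) (of_real x)"
  by (metis complex_cnj_complex_of_real poly_canopy_poly_cnj)

lemma poly_canopy_poly_three_term:
  "z * poly (canopy_poly K b n) z = poly (canopy_poly K b (Suc n)) z
     + (if n = 0 then of_real b else of_nat K * poly (canopy_poly K b (n - 1)) z)"
  by (cases n) simp_all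

lemma power_Suc_diff: "i \<le> n \<Longrightarrow> (x::'a::monoid_mult) ^ (Suc n - i) = x * x ^ (n - i)"
  by (simp add: Suc_diff_le)

lemma canopy_poly_christoffel_darboux:
  "(z - w) * (\<Sum>i\<le>n. of_nat K ^ (n - i) * poly (canopy_poly K b i) z * poly (canopy_poly K b i) w)
   = poly (canopy_poly K b (Suc n)) z * poly (canopy_poly K b n) w
     - poly (canopy_poly K b n) z * poly (canopy_poly K b (Suc n)) w"
proof (induction n)
  case 0
  then show ?case by (simp add: algebra_simps)
next
  case (Suc n)
  let ?p = "\<lambda>i. poly (canopy_poly K b i) z" and ?q = "\<lambda>i. poly (canopy_poly K b i) w"
  have "(\<Sum>i\<le>Suc n. of_nat K ^ (Suc n - i) * ?p i * ?q i)
      = of_nat K * (\<Sum>i\<le>n. of_nat K ^ (n - i) * ?p i * ?q i) + ?p (Suc n) * ?q (Suc n)"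
    by (simp add: sum_distrib_left power_Suc_diff mult_ac)
  then have "(z - w) * (\<Sum>i\<le>Suc n. of_nat K ^ (Suc n - i) * ?p i * ?q i)
      = of_nat K * ((z - w) * (\<Sum>i\<le>n. of_nat K ^ (n - i) * ?p i * ?q i))
        + (z - w) * ?p (Suc n) * ?q (Suc n)"
    by (simp add: algebra_simps)
  then show ?case
    by (simp only: Suc.IH) (simp add: algebra_simps)
qed

lemma smult_sum_right: "smult c (sum f A) = (\<Sum>i\<in>A. smult c (f i))"
  by (induct A rule: infinite_finite_induct) (auto simp: smult_add_right)

lemma canopy_poly_christoffel_darboux_pderiv:
  "pderiv (canopy_poly K b (Suc n)) * canopy_poly K b n - canopy_poly K b (Suc n) * pderiv (canopy_poly K b n)
   = (\<Sum>i\<le>n. smult (of_nat K ^ (n - i)) (canopy_poly K b i * canopy_poly K b i))"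
proof (induction n)
  case 0
  then show ?case by (simp add: pderiv_pCons)
next
  case (Suc n)
  let ?P = "canopy_poly K b"
  have "(\<Sum>i\<le>Suc n. smult (of_nat K ^ (Suc n - i)) (?P i * ?P i))
      = smult (of_nat K) (\<Sum>i\<le>n. smult (of_nat K ^ (n - i)) (?P i * ?P i)) + ?P (Suc n) * ?P (Suc n)"
    by (simp add: smult_sum_right power_Suc_diff)
  moreover have d: "pderiv (?P (Suc (Suc n)))
      = ?P (Suc n) + [:0, 1:] * pderiv (?P (Suc n)) - smult (of_nat K) (pderiv (?P n))"
    by (simp add: pderiv_mult pderiv_pCons pderiv_diff pderiv_smult)
  then have "pderiv (?P (Suc (Suc n))) * ?P (Suc n) - ?P (Suc (Suc n)) * pderiv (?P (Suc n))
      = smult (of_nat K) (pderiv (?P (Suc n)) * ?P n - ?P (Suc n) * pderiv (?P n))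
        + ?P (Suc n) * ?P (Suc n)"
    unfolding d by (simp add: algebra_simps smult_diff_right)
  ultimately show ?case
    by (simp only: Suc.IH)
qed

lemma canopy_poly_weighted_norm_pos:
  assumes "K > 0"
  shows "0 < (\<Sum>i\<le>n. real K ^ (n - i) * (cmod (poly (canopy_poly K b i) z))\<^sup>2)"
  using assms by (intro sum_pos2[where i=0]) auto

lemma canopy_poly_weighted_norm_eq:
  "(\<Sum>i\<le>n. of_nat K ^ (n - i) * poly (canopy_poly K b i) z * cnj (poly (canopy_poly K b i) z))
   = complex_of_real (\<Sum>i\<le>n. real K ^ (n - i) * (cmod (poly (canopy_poly K b i) z))\<^sup>2)"
  unfolding of_real_sum of_real_mult complex_norm_square by (simp add: mult.assoc)

lemma canopy_poly_weighted_norm_nonzero: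
  assumes "K > 0"
  shows "(\<Sum>i\<le>n. of_nat K ^ (n - i) * poly (canopy_poly K b i) z * cnj (poly (canopy_poly K b i) z)) \<noteq> 0"
  unfolding canopy_poly_weighted_norm_eq of_real_eq_0_iff
  using canopy_poly_weighted_norm_pos[OF assms] by (metis less_irrefl)

lemma canopy_poly_root_real:
  assumes "K > 0" "poly (canopy_poly K b (Suc n)) z = 0"
  shows "z \<in> \<real>"
proof -
  have "(z - cnj z) * (\<Sum>i\<le>n. of_nat K ^ (n - i) * poly (canopy_poly K b i) z * cnj (poly (canopy_poly K b i) z)) = 0"
    using canopy_poly_christoffel_darboux[where w="cnj z"] assms(2) by (simp add: poly_canopy_poly_cnj)
  then have "z = cnj z"
    using canopy_poly_weighted_norm_nonzero[OF assms(1)] by simp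
  then show ?thesis
    by (simp add: Reals_cnj_iff)
qed

lemma rsquarefree_canopy_poly:
  assumes "K > 0"
  shows "rsquarefree (canopy_poly K b (Suc n))"
  unfolding rsquarefree_roots
proof (intro allI notI)
  fix a
  assume a: "poly (canopy_poly K b (Suc n)) a = 0 \<and> poly (pderiv (canopy_poly K b (Suc n))) a = 0"
  then have "cnj a = a"
    using canopy_poly_root_real[OF assms] Reals_cnj_iff by blast
  then have real: "cnj (poly (canopy_poly K b i) a) = poly (canopy_poly K b i) a" for i
    by (metis poly_canopy_poly_cnj)
  have "poly (pderiv (canopy_poly K b (Suc n)) * canopy_poly K b n
        - canopy_poly K b (Suc n) * pderiv (canopy_poly K b n)) a = 0"
    using a by simp
  then have "(\<Sum>i\<le>n. of_nat K ^ (n - i) * poly (canopy_poly K b i) a * cnj (poly (canopy_poly K b i) a)) = 0"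
    unfolding canopy_poly_christoffel_darboux_pderiv poly_sum by (simp add: real mult.assoc)
  then show False
    using canopy_poly_weighted_norm_nonzero[OF assms] by simp
qed

lemma card_canopy_poly_roots:
  assumes "K > 0"
  shows "card {z. poly (canopy_poly K b n) z = 0} = n"
proof (cases n)
  case 0
  then show ?thesis by simp
next
  case (Suc n')
  let ?p = "canopy_poly K b n"
  have decompose: "(\<Prod>z | poly ?p z = 0. [:-z, 1:]) = ?p"
    using complex_poly_decompose_rsquarefree[OF rsquarefree_canopy_poly[OF assms]] Suc
    by (simp add: coeff_canopy_poly)
  have "n = degree (\<Prod>z | poly ?p z = 0. [:-z, 1:])"
    by (simp only: decompose degree_canopy_poly)
  also have "\<dots> = (\<Sum>z | poly ?p z = 0. degree [:-z, 1:])"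
    by (rule degree_prod_sum_eq) simp
  finally show ?thesis
    by simp
qed

lemma canopy_poly_combination_eq_0:
  assumes "(\<Sum>i<n. smult (w i) (canopy_poly K b i)) = 0" "i < n"
  shows "w i = 0"
  using assms
proof (induction n)
  case 0
  then show ?case by simp
next
  case (Suc n)
  have "coeff (\<Sum>i<n. smult (w i) (canopy_poly K b i)) n = 0"
    using coeff_canopy_poly[of K b] by (simp add: coeff_sum)
  then have "coeff (\<Sum>i<Suc n. smult (w i) (canopy_poly K b i)) n = w n"
    using coeff_canopy_poly[of K b n] by simp
  then have "w n = 0"
    unfolding Suc.prems(1) by simp
  then show ?case
    using Suc by (auto simp: less_Suc_eq)
qed

lemma canopy_poly_combination_vanishing_on_roots:
  assumes "K > 0"
    and vanish: "\<And>x::real. poly (canopy_poly K b n) (of_real x) = 0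
                 \<Longrightarrow> (\<Sum>i<n. poly (canopy_poly K b i) (of_real x) * w i) = 0"
    and "i < n"
  shows "w i = 0"
proof -
  define Q where "Q = (\<Sum>i<n. smult (w i) (canopy_poly K b i))"
  have poly_Q: "poly Q z = (\<Sum>i<n. poly (canopy_poly K b i) z * w i)" for z
    by (simp add: Q_def poly_sum mult.commute)
  have "Q = 0"
  proof (rule ccontr)
    assume "Q \<noteq> 0"
    have "{z. poly (canopy_poly K b n) z = 0} \<subseteq> {z. poly Q z = 0}"
    proof safe
      fix z assume z: "poly (canopy_poly K b n) z = 0"
      then have "z \<in> \<real>"
        using canopy_poly_root_real[OF assms(1)] \<open>i < n\<close> by (cases n) auto
      then show "poly Q z = 0"
        using vanish[of "Re z"] z by (simp add: poly_Q)
    qed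
    then have "card {z. poly (canopy_poly K b n) z = 0} \<le> card {z. poly Q z = 0}"
      by (rule card_mono[OF poly_roots_finite[OF \<open>Q \<noteq> 0\<close>]])
    then have "n \<le> card {z. poly Q z = 0}"
      by (simp only: card_canopy_poly_roots[OF assms(1)])
    also have "\<dots> \<le> degree Q"
      by (rule card_poly_roots_bound[OF \<open>Q \<noteq> 0\<close>])
    also have "degree Q < n"
      unfolding Q_def using \<open>i < n\<close>
      by (intro degree_sum_less) (auto intro: le_less_trans[OF degree_smult_le])
    finally show False by simp
  qed
  then show ?thesis
    using canopy_poly_combination_eq_0 assms(3) unfolding Q_def by blast
qed

lemma canopy_poly_roots_orthogonal:
  assumes "poly (canopy_poly K b (Suc n)) z = 0" "poly (canopy_poly K b (Suc n)) w = 0" "z \<noteq> w"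
  shows "(\<Sum>i\<le>n. of_nat K ^ (n - i) * poly (canopy_poly K b i) z * poly (canopy_poly K b i) w) = 0"
  using canopy_poly_christoffel_darboux[of z w K n b] assms by simp

section \<open>Roots of unity\<close>

definition unit_root :: "nat \<Rightarrow> complex" where
  "unit_root K = cis (2 * pi / real K)"

lemma unit_root_power: "unit_root K ^ k = cis (2 * pi * real k / real K)"
  unfolding unit_root_def Complex.DeMoivre by (simp add: algebra_simps)

lemma unit_root_power_power_K:
  assumes "K > 0"
  shows "(unit_root K ^ k) ^ K = 1"
proof -
  have "(unit_root K ^ k) ^ K = cis (2 * pi * real k)"
    unfolding unit_root_power Complex.DeMoivre using assms by simp
  then show ?thesis
    by (simp add: cis_multiple_2pi)
qed

lemma cnj_unit_root_power_mult: "cnj (unit_root K ^ k) * unit_root K ^ k = 1"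
  by (simp only: unit_root_power cis_cnj cis_mult) simp

lemma unit_root_power_inj:
  assumes "K > 0" "a < K" "c < K" "unit_root K ^ a = unit_root K ^ c"
  shows "a = c"
  using Complex.bij_betw_roots_unity[OF assms(1)] assms(2-4)
  unfolding bij_betw_def inj_on_def unit_root_power by blast

lemma sum_unit_root_characters:
  assumes "K > 0" "a < K" "c < K"
  shows "(\<Sum>r<K. cnj ((unit_root K ^ a) ^ r) * (unit_root K ^ c) ^ r) = (if a = c then of_nat K else 0)"
proof -
  define u where "u = cnj (unit_root K ^ a) * unit_root K ^ c"
  have terms: "cnj ((unit_root K ^ a) ^ r) * (unit_root K ^ c) ^ r = u ^ r" for r
    unfolding u_def by (simp add: power_mult_distrib)
  show ?thesis
  proof (cases "a = c")
    case True
    then have "u = 1"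
      unfolding u_def by (rule ssubst) (rule cnj_unit_root_power_mult)
    then show ?thesis
      unfolding terms using True by simp
  next
    case False
    have "u \<noteq> 1"
    proof
      assume "u = 1"
      have "unit_root K ^ c = (unit_root K ^ a * cnj (unit_root K ^ a)) * unit_root K ^ c"
        using cnj_unit_root_power_mult[of K a] by (simp only: mult.commute mult_1)
      also have "\<dots> = unit_root K ^ a * u"
        unfolding u_def by (simp only: mult.assoc)
      finally have "unit_root K ^ c = unit_root K ^ a"
        using \<open>u = 1\<close> by simp
      then show False
        using unit_root_power_inj[OF assms(1,3,2)] False by blast
    qed
    moreover have "u ^ K = 1"
      unfolding u_def power_mult_distrib complex_cnj_power[symmetric]
      using unit_root_power_power_K[OF assms(1)] by simp
    ultimately show ?thesis
      unfolding terms using False by (simp add: sum_gp_strict)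
  qed
qed

lemma sum_unit_root_character:
  assumes "0 < s" "s < K"
  shows "(\<Sum>r<K. (unit_root K ^ s) ^ r) = 0"
  using sum_unit_root_characters[of K 0 s] assms by simp

lemma constant_if_fourier_coefficients_vanish:
  assumes K: "K > 0"
    and vanish: "\<And>s. 0 < s \<Longrightarrow> s < K \<Longrightarrow> (\<Sum>r<K. cnj ((unit_root K ^ s) ^ r) * \<beta> r) = 0"
    and "t < K"
  shows "\<beta> t = \<beta> 0"
proof -
  define \<gamma> where "\<gamma> s = (\<Sum>r<K. cnj ((unit_root K ^ s) ^ r) * \<beta> r)" for s
  have swap: "(unit_root K ^ s) ^ r = (unit_root K ^ r) ^ s" for r s
    by (simp flip: power_mult add: mult.commute)
  have inversion: "(\<Sum>s<K. (unit_root K ^ s) ^ t' * \<gamma> s) = of_nat K * \<beta> t'" if "t' < K" for t'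
  proof -
    have "(\<Sum>s<K. (unit_root K ^ s) ^ t' * \<gamma> s)
        = (\<Sum>r<K. \<beta> r * (\<Sum>s<K. cnj ((unit_root K ^ r) ^ s) * (unit_root K ^ t') ^ s))"
      unfolding \<gamma>_def sum_distrib_left
      by (subst sum.swap) (intro sum.cong refl, simp only: swap mult_ac)
    also have "\<dots> = (\<Sum>r<K. if r = t' then of_nat K * \<beta> r else 0)"
      using sum_unit_root_characters[OF K _ that] by (intro sum.cong refl) simp
    also have "\<dots> = of_nat K * \<beta> t'"
      using that by simp
    finally show ?thesis .
  qed
  have "(\<Sum>s<K. (unit_root K ^ s) ^ t' * \<gamma> s) = (\<Sum>s\<in>{0}. (unit_root K ^ s) ^ t' * \<gamma> s)" for t'
    using K vanish by (intro sum.mono_neutral_right) (auto simp: \<gamma>_def)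
  then have "(\<Sum>s<K. (unit_root K ^ s) ^ t' * \<gamma> s) = \<gamma> 0" for t'
    by simp
  then have "of_nat K * \<beta> t = of_nat K * \<beta> 0"
    using inversion[OF \<open>t < K\<close>] inversion[OF K] by metis
  then show ?thesis
    using K by simp
qed

section \<open>Eigenfunctions supported below a vertex\<close>

lemma div_eq_iff_child:
  assumes "K > 0"
  shows "(c::nat) div K = t \<longleftrightarrow> (\<exists>r<K. c = K * t + r)"
  using assms by (auto intro!: exI[of _ "c mod K"] simp: mult.commute)

lemma canopy_neighbours:
  assumes "K > 0"
  shows "{y. canopy_adj K (n, t) y}
    = insert (Suc n, t div K) (if n = 0 then {} else (\<lambda>r. (n - 1, K * t + r)) ` {..<K})"
proof -
  have "x = canopy_parent K y \<longleftrightarrow> n \<noteq> 0 \<and> (\<exists>r<K. y = (n - 1, K * t + r))"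
    if "x = (n, t)" for x y
    using that div_eq_iff_child[OF assms, of "snd y" t] unfolding canopy_parent_def by (cases y) auto
  then show ?thesis
    unfolding canopy_adj_def by (auto simp: canopy_parent_def)
qed

lemma canopy_A_eq:
  assumes "K > 0"
  shows "canopy_A K \<psi> (n, t)
    = \<psi> (Suc n, t div K) + (if n = 0 then 0 else (\<Sum>r<K. \<psi> (n - 1, K * t + r)))"
proof (cases "n = 0")
  case True
  then show ?thesis
    unfolding canopy_A_def canopy_neighbours[OF assms] by simp
next
  case False
  have "inj_on (\<lambda>r. (n - 1, K * t + r)) {..<K}"
    by (auto simp: inj_on_def)
  then show ?thesis
    unfolding canopy_A_def canopy_neighbours[OF assms] using False
    by (subst sum.insert) (auto simp: sum.reindex)
qed

lemma canopy_B_eq: "canopy_B b \<psi> (n, t) = (if n = 0 then complex_of_real b * \<psi> (n, t) else 0)"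
  by (simp add: canopy_B_def canopy_boundary_def)

lemma canopy_H_scale: "canopy_H K b (\<lambda>x. k * f x) = (\<lambda>x. k * canopy_H K b f x)"
  by (rule ext) (simp add: canopy_H_def canopy_A_def canopy_B_def sum_distrib_left algebra_simps)

definition below :: "nat \<Rightarrow> nat \<Rightarrow> nat \<Rightarrow> nat \<Rightarrow> nat \<Rightarrow> bool" where
  "below K m j i t \<longleftrightarrow> i < m \<and> t div K ^ (m - i) = j"

text \<open>For \<open>(i, t)\<close> below \<open>(m, j)\<close>, \<open>branch K m i t\<close> is the \<open>r < K\<close> such that \<open>(i, t)\<close> lies below
  the child \<open>(m - 1, K * j + r)\<close> of \<open>(m, j)\<close>.\<close>

definition branch :: "nat \<Rightarrow> nat \<Rightarrow> nat \<Rightarrow> nat \<Rightarrow> nat" where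
  "branch K m i t = t div K ^ (m - 1 - i) mod K"

lemma div_div_power: "(t::nat) div K div K ^ e = t div K ^ Suc e"
  by (simp only: power_Suc div_mult2_eq)

lemma child_div_power_Suc: "(r::nat) < K \<Longrightarrow> (K * t + r) div K ^ Suc e = t div K ^ e"
  using div_div_power[of "K * t + r" K e] by simp

lemma below_parent: "below K m j (Suc n) (t div K) \<longleftrightarrow> Suc n < m \<and> below K m j n t"
proof (cases "Suc n < m")
  case True
  then have "m - n = Suc (m - Suc n)"
    by simp
  then show ?thesis
    using True unfolding below_def by (simp add: div_div_power)
qed (auto simp: below_def)

lemma branch_parent: "Suc n < m \<Longrightarrow> branch K m (Suc n) (t div K) = branch K m n t"
proof -
  assume "Suc n < m"
  then have "m - 1 - n = Suc (m - 1 - Suc n)"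
    by simp
  then show ?thesis
    unfolding branch_def by (simp add: div_div_power)
qed

lemma below_child:
  assumes "r < K"
  shows "below K m j n (K * t + r) \<longleftrightarrow> (Suc n < m \<and> below K m j (Suc n) t) \<or> (Suc n = m \<and> t = j)"
proof (cases "n < m")
  case True
  then have "m - n = Suc (m - Suc n)"
    by simp
  then have "(K * t + r) div K ^ (m - n) = t div K ^ (m - Suc n)"
    using child_div_power_Suc[OF assms] by simp
  then show ?thesis
    using True unfolding below_def by (cases "Suc n = m") auto
qed (auto simp: below_def)

lemma branch_child: "r < K \<Longrightarrow> Suc n < m \<Longrightarrow> branch K m n (K * t + r) = branch K m (Suc n) t"
proof -
  assume "r < K" "Suc n < m"
  moreover from \<open>Suc n < m\<close> have "m - 1 - n = Suc (m - 1 - Suc n)"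
    by simp
  ultimately show ?thesis
    unfolding branch_def using child_div_power_Suc by simp
qed

lemma branch_top_child: "r < K \<Longrightarrow> Suc n = m \<Longrightarrow> branch K m n (K * t + r) = r"
  unfolding branch_def by auto

definition canopy_ef :: "nat \<Rightarrow> real \<Rightarrow> nat \<Rightarrow> nat \<Rightarrow> nat \<Rightarrow> real \<Rightarrow> canopy_vertex \<Rightarrow> complex" where
  "canopy_ef K b m j s lam = (\<lambda>(i, t). if below K m j i t
     then (unit_root K ^ s) ^ branch K m i t * poly (canopy_poly K b i) (of_real lam) else 0)"

lemma canopy_ef_apply:
  "canopy_ef K b m j s lam (i, t) = (if below K m j i t
     then (unit_root K ^ s) ^ branch K m i t * poly (canopy_poly K b i) (of_real lam) else 0)"
  by (simp add: canopy_ef_def)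

lemma canopy_H_ef_below:
  assumes K: "K > 0" and root: "poly (canopy_poly K b m) (of_real lam) = 0"
    and below: "below K m j n t"
  shows "canopy_H K b (canopy_ef K b m j s lam) (n, t) = of_real lam * canopy_ef K b m j s lam (n, t)"
proof -
  let ?f = "canopy_ef K b m j s lam" and ?p = "\<lambda>i. poly (canopy_poly K b i) (of_real lam)"
  define \<rho> where "\<rho> = (unit_root K ^ s) ^ branch K m n t"
  have "n < m"
    using below by (simp add: below_def)
  have self: "?f (n, t) = \<rho> * ?p n"
    using below by (simp add: canopy_ef_apply \<rho>_def)
  have parent: "?f (Suc n, t div K) = \<rho> * ?p (Suc n)"
  proof (cases "Suc n < m")
    case True
    then show ?thesis
      using below by (simp add: canopy_ef_apply below_parent branch_parent \<rho>_def)
  next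
    case False
    then have "Suc n = m"
      using \<open>n < m\<close> by simp
    then show ?thesis
      using root by (simp add: canopy_ef_apply below_parent)
  qed
  have child: "?f (n - 1, K * t + r) = \<rho> * ?p (n - 1)" if "n \<noteq> 0" "r < K" for r
    using below_child[OF \<open>r < K\<close>, of m j "n - 1" t] branch_child[OF \<open>r < K\<close>, of "n - 1" m t]
      below \<open>n < m\<close> that by (simp add: canopy_ef_apply \<rho>_def)
  have "canopy_H K b ?f (n, t)
      = \<rho> * (?p (Suc n) + (if n = 0 then of_real b else of_nat K * ?p (n - 1)))"
    unfolding canopy_H_def canopy_A_eq[OF K] canopy_B_eq
    using self parent child by (cases n) (simp_all add: algebra_simps)
  also have "\<dots> = of_real lam * ?f (n, t)"
    unfolding self poly_canopy_poly_three_term[symmetric] by (simp only: mult_ac)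
  finally show ?thesis .
qed

lemma canopy_H_ef:
  assumes K: "K > 0" and s: "0 < s" "s < K" and root: "poly (canopy_poly K b m) (of_real lam) = 0"
  shows "canopy_H K b (canopy_ef K b m j s lam) = (\<lambda>x. of_real lam * canopy_ef K b m j s lam x)"
proof (rule ext, clarify)
  fix n t
  let ?f = "canopy_ef K b m j s lam" and ?p = "\<lambda>i. poly (canopy_poly K b i) (of_real lam)"
  have "m \<noteq> 0"
    using root by (cases m) auto
  consider "below K m j n t" | "(n, t) = (m, j)" | "\<not> below K m j n t" "(n, t) \<noteq> (m, j)"
    by blast
  then show "canopy_H K b ?f (n, t) = of_real lam * ?f (n, t)"
  proof cases
    case 1
    then show ?thesis
      by (rule canopy_H_ef_below[OF K root])
  next
    case 2
    have child: "?f (m - 1, K * j + r) = (unit_root K ^ s) ^ r * ?p (m - 1)" if "r < K" for r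
      using below_child[OF that, of m j "m - 1" j] branch_top_child[OF that, of "m - 1" m j] \<open>m \<noteq> 0\<close>
      by (simp add: canopy_ef_apply)
    have "canopy_H K b ?f (m, j) = (\<Sum>r<K. ?f (m - 1, K * j + r))"
      unfolding canopy_H_def canopy_A_eq[OF K] canopy_B_eq
      using \<open>m \<noteq> 0\<close> by (simp add: canopy_ef_apply below_parent below_def)
    also have "\<dots> = (\<Sum>r<K. (unit_root K ^ s) ^ r) * ?p (m - 1)"
      unfolding sum_distrib_right by (intro sum.cong refl child) simp
    finally show ?thesis
      using 2 sum_unit_root_character[OF s] by (simp add: canopy_ef_apply below_def)
  next
    case 3
    have "?f (n - 1, K * t + r) = 0" if "n \<noteq> 0" "r < K" for r
      using below_child[OF \<open>r < K\<close>, of m j "n - 1" t] 3 that by (auto simp: canopy_ef_apply)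
    then show ?thesis
      unfolding canopy_H_def canopy_A_eq[OF K] canopy_B_eq
      using 3 by (cases n) (simp_all add: canopy_ef_apply below_parent)
  qed
qed

section \<open>Block sums and orthogonality\<close>

text \<open>\<open>block K e c\<close> is the set of positions \<open>t\<close> such that \<open>(i, t)\<close> lies \<open>e\<close> layers below \<open>(i + e, c)\<close>.\<close>

definition block :: "nat \<Rightarrow> nat \<Rightarrow> nat \<Rightarrow> nat set" where
  "block K e c = {t. t div K ^ e = c}"

lemma div_eq_iff_interval:
  assumes "(n::nat) > 0"
  shows "t div n = c \<longleftrightarrow> c * n \<le> t \<and> t < c * n + n"
proof
  assume "t div n = c"
  then have "t = c * n + t mod n"
    by (metis div_mult_mod_eq)
  moreover have "t mod n < n"
    using assms by simp
  ultimately show "c * n \<le> t \<and> t < c * n + n"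
    by linarith
next
  assume "c * n \<le> t \<and> t < c * n + n"
  then show "t div n = c"
    by (intro div_nat_eqI) (auto simp: mult.commute)
qed

lemma block_eq_atLeastLessThan: "K > 0 \<Longrightarrow> block K e c = {c * K ^ e ..< c * K ^ e + K ^ e}"
  unfolding block_def using div_eq_iff_interval[of "K ^ e"] by auto

lemma finite_block [simp]: "K > 0 \<Longrightarrow> finite (block K e c)"
  by (simp add: block_eq_atLeastLessThan)

lemma card_block: "K > 0 \<Longrightarrow> card (block K e c) = K ^ e"
  by (simp add: block_eq_atLeastLessThan)

lemma div_power_add: "(t::nat) div K ^ (f + g) = t div K ^ f div K ^ g"
  by (simp add: power_add div_mult2_eq)

lemma sum_block_split:
  assumes K: "K > 0" and "f \<le> e"
  shows "(\<Sum>t\<in>block K e c. h t) = (\<Sum>y\<in>block K (e - f) c. \<Sum>t\<in>block K f y. h t)"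
proof -
  have div_e: "t div K ^ e = t div K ^ f div K ^ (e - f)" for t
    using div_power_add[of t K f "e - f"] \<open>f \<le> e\<close> by simp
  have "(\<lambda>t. t div K ^ f) ` block K e c \<subseteq> block K (e - f) c"
    unfolding block_def using div_e by auto
  then have "(\<Sum>t\<in>block K e c. h t)
      = (\<Sum>y\<in>block K (e - f) c. sum h {t \<in> block K e c. t div K ^ f = y})"
    using sum.group[OF finite_block[OF K] finite_block[OF K], where h=h] by simp
  also have "\<dots> = (\<Sum>y\<in>block K (e - f) c. \<Sum>t\<in>block K f y. h t)"
  proof -
    have "{t \<in> block K e c. t div K ^ f = y} = block K f y" if "y \<in> block K (e - f) c" for y
      using that by (auto simp: block_def div_e)
    then show ?thesis
      by (intro sum.cong refl) simp
  qed
  finally show ?thesis .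
qed

lemma sum_block_Suc:
  assumes K: "K > 0"
  shows "(\<Sum>t\<in>block K (Suc e) j. h t) = (\<Sum>r<K. \<Sum>t\<in>block K e (K * j + r). h t)"
proof -
  have "y \<in> block K 1 j \<longleftrightarrow> (\<exists>r<K. y = K * j + r)" for y
    using div_eq_iff_child[OF K, of y j] by (simp add: block_def)
  then have "block K 1 j = (\<lambda>r. K * j + r) ` {..<K}"
    by auto
  moreover have "(\<Sum>t\<in>block K (Suc e) j. h t) = (\<Sum>y\<in>block K 1 j. \<Sum>t\<in>block K e y. h t)"
    using sum_block_split[OF K, of e "Suc e"] by simp
  ultimately show ?thesis
    by (simp add: sum.reindex inj_on_def)
qed

lemma sum_block_const:
  assumes "K > 0" "\<And>t. t \<in> block K e c \<Longrightarrow> h t = v"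
  shows "(\<Sum>t\<in>block K e c. h t) = of_nat (K ^ e) * v"
  using assms card_block[OF assms(1), of e c] by simp

lemma
  assumes "i \<le> l" "l < m" "t \<in> block K (l - i) c"
  shows below_block: "below K m j i t \<longleftrightarrow> below K m j l c"
    and branch_block: "branch K m i t = branch K m l c"
proof -
  have c: "t div K ^ (l - i) = c"
    using assms(3) by (simp add: block_def)
  have "m - i = (l - i) + (m - l)" "m - 1 - i = (l - i) + (m - 1 - l)"
    using assms by simp_all
  then have "t div K ^ (m - i) = c div K ^ (m - l)" "t div K ^ (m - 1 - i) = c div K ^ (m - 1 - l)"
    using div_power_add[of t K "l - i"] c by simp_all
  then show "below K m j i t \<longleftrightarrow> below K m j l c" "branch K m i t = branch K m l c"
    using assms unfolding below_def branch_def by auto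
qed

lemma canopy_ef_on_branch:
  assumes "i < m" "r < K" "t \<in> block K (m - 1 - i) (K * j + r)"
  shows "canopy_ef K b m j s lam (i, t) = (unit_root K ^ s) ^ r * poly (canopy_poly K b i) (of_real lam)"
proof -
  have top: "i \<le> m - 1" "m - 1 < m"
    using assms(1) by simp_all
  have "below K m j (m - 1) (K * j + r)" "branch K m (m - 1) (K * j + r) = r"
    using below_child[OF assms(2), of m j "m - 1" j] branch_top_child[OF assms(2), of "m - 1" m j] assms(1)
    by simp_all
  then show ?thesis
    using below_block[OF top assms(3)] branch_block[OF top assms(3)] by (simp add: canopy_ef_apply)
qed

definition subtree :: "nat \<Rightarrow> nat \<Rightarrow> nat \<Rightarrow> canopy_vertex set" where
  "subtree K m j = {(i, t). below K m j i t}"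

lemma subtree_eq_Sigma: "subtree K m j = Sigma {..<m} (\<lambda>i. block K (m - i) j)"
  by (auto simp: subtree_def below_def block_def)

lemma finite_subtree: "K > 0 \<Longrightarrow> finite (subtree K m j)"
  unfolding subtree_eq_Sigma by auto

lemma canopy_ef_outside_subtree: "x \<notin> subtree K m j \<Longrightarrow> canopy_ef K b m j s lam x = 0"
  by (auto simp: subtree_def canopy_ef_def split: if_splits)

definition block_sum :: "nat \<Rightarrow> (canopy_vertex \<Rightarrow> complex) \<Rightarrow> nat \<Rightarrow> nat \<Rightarrow> nat \<Rightarrow> complex" where
  "block_sum K \<psi> i e c = (\<Sum>t\<in>block K e c. \<psi> (i, t))"

lemma l2_inner_canopy_ef:
  assumes K: "K > 0"
  shows "l2_inner (canopy_ef K b m j s lam) \<psi>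
    = (\<Sum>i<m. poly (canopy_poly K b i) (of_real lam)
         * (\<Sum>r<K. cnj ((unit_root K ^ s) ^ r) * block_sum K \<psi> i (m - 1 - i) (K * j + r)))"
proof -
  let ?f = "canopy_ef K b m j s lam"
  have "l2_inner ?f \<psi> = (\<Sum>x\<in>subtree K m j. cnj (?f x) * \<psi> x)"
    using finite_subtree[OF K] canopy_ef_outside_subtree by (rule l2_inner_finite_support)
  also have "\<dots> = (\<Sum>i<m. \<Sum>t\<in>block K (m - i) j. cnj (?f (i, t)) * \<psi> (i, t))"
    unfolding subtree_eq_Sigma using K by (subst sum.Sigma) auto
  also have "\<dots> = (\<Sum>i<m. poly (canopy_poly K b i) (of_real lam)
         * (\<Sum>r<K. cnj ((unit_root K ^ s) ^ r) * block_sum K \<psi> i (m - 1 - i) (K * j + r)))"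
  proof (intro sum.cong refl)
    fix i
    assume "i \<in> {..<m}"
    then have "m - i = Suc (m - 1 - i)"
      by simp
    then have "(\<Sum>t\<in>block K (m - i) j. cnj (?f (i, t)) * \<psi> (i, t))
        = (\<Sum>r<K. \<Sum>t\<in>block K (m - 1 - i) (K * j + r). cnj (?f (i, t)) * \<psi> (i, t))"
      by (simp only: sum_block_Suc[OF K])
    also have "\<dots> = (\<Sum>r<K. \<Sum>t\<in>block K (m - 1 - i) (K * j + r).
        poly (canopy_poly K b i) (of_real lam) * (cnj ((unit_root K ^ s) ^ r) * \<psi> (i, t)))"
      using \<open>i \<in> {..<m}\<close> by (intro sum.cong refl) (simp add: canopy_ef_on_branch)
    finally show "(\<Sum>t\<in>block K (m - i) j. cnj (?f (i, t)) * \<psi> (i, t))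
        = poly (canopy_poly K b i) (of_real lam)
          * (\<Sum>r<K. cnj ((unit_root K ^ s) ^ r) * block_sum K \<psi> i (m - 1 - i) (K * j + r))"
      by (simp add: block_sum_def sum_distrib_left)
  qed
  finally show ?thesis .
qed

lemma block_sum_canopy_ef_top:
  assumes K: "K > 0" and "i < m" and s: "0 < s" "s < K"
  shows "block_sum K (canopy_ef K b m j s lam) i (m - i) j = 0"
proof -
  have "m - i = Suc (m - 1 - i)"
    using \<open>i < m\<close> by simp
  then have "block_sum K (canopy_ef K b m j s lam) i (m - i) j
      = (\<Sum>r<K. \<Sum>t\<in>block K (m - 1 - i) (K * j + r). canopy_ef K b m j s lam (i, t))"
    unfolding block_sum_def by (simp only: sum_block_Suc[OF K])
  also have "\<dots> = (\<Sum>r<K. of_nat (K ^ (m - 1 - i)) * ((unit_root K ^ s) ^ r * poly (canopy_poly K b i) (of_real lam)))"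
    using \<open>i < m\<close> by (intro sum.cong refl sum_block_const[OF K]) (simp add: canopy_ef_on_branch)
  also have "\<dots> = of_nat (K ^ (m - 1 - i)) * poly (canopy_poly K b i) (of_real lam) * (\<Sum>r<K. (unit_root K ^ s) ^ r)"
    by (simp add: sum_distrib_left algebra_simps)
  also have "\<dots> = 0"
    using sum_unit_root_character[OF s] by simp
  finally show ?thesis .
qed

lemma block_sum_canopy_ef_above:
  assumes K: "K > 0" and "m' < m" and s': "0 < s'" "s' < K"
  shows "block_sum K (canopy_ef K b m' j' s' mu) i (m - 1 - i) c = 0"
proof (cases "i < m'")
  case False
  then show ?thesis
    by (simp add: block_sum_def canopy_ef_apply below_def)
next
  case True
  let ?f = "canopy_ef K b m' j' s' mu"
  have "m' - i \<le> m - 1 - i"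
    using \<open>m' < m\<close> True by simp
  then have "block_sum K ?f i (m - 1 - i) c
      = (\<Sum>y\<in>block K (m - 1 - i - (m' - i)) c. \<Sum>t\<in>block K (m' - i) y. ?f (i, t))"
    unfolding block_sum_def by (rule sum_block_split[OF K])
  also have "\<dots> = 0"
  proof (rule sum.neutral, rule ballI)
    fix y
    show "(\<Sum>t\<in>block K (m' - i) y. ?f (i, t)) = 0"
    proof (cases "y = j'")
      case True
      then show ?thesis
        using block_sum_canopy_ef_top[OF K \<open>i < m'\<close> s'] by (simp add: block_sum_def)
    next
      case False
      then show ?thesis
        by (intro sum.neutral) (auto simp: canopy_ef_apply below_def block_def)
    qed
  qed
  finally show ?thesis .
qed

lemma block_sum_canopy_ef_branch:
  assumes K: "K > 0" and "i < m" "r < K"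
  shows "block_sum K (canopy_ef K b m j' s' mu) i (m - 1 - i) (K * j + r)
    = (if j = j' then of_nat (K ^ (m - 1 - i)) * ((unit_root K ^ s') ^ r * poly (canopy_poly K b i) (of_real mu)) else 0)"
proof (cases "j = j'")
  case True
  have "block_sum K (canopy_ef K b m j' s' mu) i (m - 1 - i) (K * j + r)
      = of_nat (K ^ (m - 1 - i)) * ((unit_root K ^ s') ^ r * poly (canopy_poly K b i) (of_real mu))"
    unfolding block_sum_def using assms True by (intro sum_block_const[OF K]) (simp add: canopy_ef_on_branch)
  then show ?thesis
    using True by simp
next
  case False
  have "\<not> below K m j' i t" if "t \<in> block K (m - 1 - i) (K * j + r)" for t
    using below_block[of i "m - 1" m t K "K * j + r" j'] below_child[OF \<open>r < K\<close>, of m j' "m - 1" j]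
      that \<open>i < m\<close> False by simp
  then show ?thesis
    using False by (simp add: block_sum_def canopy_ef_apply)
qed

definition ef_norm_sq :: "nat \<Rightarrow> real \<Rightarrow> nat \<Rightarrow> real \<Rightarrow> real" where
  "ef_norm_sq K b m lam = real K * (\<Sum>i<m. real K ^ (m - 1 - i) * (cmod (poly (canopy_poly K b i) (of_real lam)))\<^sup>2)"

lemma ef_norm_sq_pos:
  assumes "K > 0" "0 < m"
  shows "0 < ef_norm_sq K b m lam"
proof -
  obtain n where "m = Suc n"
    using assms(2) gr0_implies_Suc by blast
  then show ?thesis
    unfolding ef_norm_sq_def using canopy_poly_weighted_norm_pos[OF assms(1)]
    by (simp add: lessThan_Suc_atMost assms(1))
qed

lemma l2_inner_canopy_ef_same_layer:
  assumes K: "K > 0" and "s < K" "s' < K"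
  shows "l2_inner (canopy_ef K b m j s lam) (canopy_ef K b m j' s' mu)
    = (if j = j' \<and> s = s' then of_nat K * (\<Sum>i<m. of_nat K ^ (m - 1 - i)
         * poly (canopy_poly K b i) (of_real lam) * poly (canopy_poly K b i) (of_real mu)) else 0)"
proof -
  let ?p = "\<lambda>i. poly (canopy_poly K b i) (of_real lam)" and ?q = "\<lambda>i. poly (canopy_poly K b i) (of_real mu)"
  have "l2_inner (canopy_ef K b m j s lam) (canopy_ef K b m j' s' mu)
      = (\<Sum>i<m. ?p i * (\<Sum>r<K. cnj ((unit_root K ^ s) ^ r)
           * (if j = j' then of_nat (K ^ (m - 1 - i)) * ((unit_root K ^ s') ^ r * ?q i) else 0)))"
    unfolding l2_inner_canopy_ef[OF K] using block_sum_canopy_ef_branch[OF K]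
    by (intro sum.cong refl) simp
  also have "\<dots> = (if j = j' then (\<Sum>i<m. of_nat K ^ (m - 1 - i) * ?p i * ?q i)
      * (\<Sum>r<K. cnj ((unit_root K ^ s) ^ r) * (unit_root K ^ s') ^ r) else 0)"
    by (simp add: sum_distrib_left sum_distrib_right mult_ac)
  also have "\<dots> = (if j = j' \<and> s = s' then of_nat K * (\<Sum>i<m. of_nat K ^ (m - 1 - i) * ?p i * ?q i) else 0)"
    unfolding sum_unit_root_characters[OF assms] by (simp add: mult.commute)
  finally show ?thesis .
qed

lemma l2_inner_canopy_ef_lower_layer:
  assumes "K > 0" "m' < m" "0 < s'" "s' < K"
  shows "l2_inner (canopy_ef K b m j s lam) (canopy_ef K b m' j' s' mu) = 0"
  unfolding l2_inner_canopy_ef[OF assms(1)] block_sum_canopy_ef_above[OF assms] by simp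

lemma l2_inner_canopy_ef_ef:
  assumes K: "K > 0" and s: "0 < s" "s < K" and s': "0 < s'" "s' < K"
    and lam: "poly (canopy_poly K b m) (of_real lam) = 0"
    and mu: "poly (canopy_poly K b m') (of_real mu) = 0"
  shows "l2_inner (canopy_ef K b m j s lam) (canopy_ef K b m' j' s' mu)
    = (if (m, j, s, lam) = (m', j', s', mu) then of_real (ef_norm_sq K b m lam) else 0)"
proof (cases m' m rule: linorder_cases)
  case less
  then show ?thesis
    using l2_inner_canopy_ef_lower_layer[OF K less s'] by auto
next
  case greater
  have "l2_inner (canopy_ef K b m' j' s' mu) (canopy_ef K b m j s lam) = 0"
    by (rule l2_inner_canopy_ef_lower_layer[OF K greater s])
  then have "l2_inner (canopy_ef K b m j s lam) (canopy_ef K b m' j' s' mu) = 0"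
    by (subst l2_inner_commute) simp
  then show ?thesis
    using greater by auto
next
  case equal
  let ?p = "\<lambda>i. poly (canopy_poly K b i) (of_real lam)" and ?q = "\<lambda>i. poly (canopy_poly K b i) (of_real mu)"
  obtain n where n: "m = Suc n"
    using canopy_poly_root_pos[OF lam] gr0_implies_Suc by blast
  have "(\<Sum>i<m. of_nat K ^ (m - 1 - i) * ?p i * ?q i)
      = (if lam = mu then of_real (ef_norm_sq K b m lam) / of_nat K else 0)"
  proof (cases "lam = mu")
    case True
    have square: "poly (canopy_poly K b i) (of_real x) * poly (canopy_poly K b i) (of_real x)
        = of_real ((cmod (poly (canopy_poly K b i) (of_real x)))\<^sup>2)" for i x
      using complex_norm_square[of "poly (canopy_poly K b i) (of_real x)"] by simp
    show ?thesis
      using K True unfolding n ef_norm_sq_def lessThan_Suc_atMost by (simp add: square mult.assoc)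
  next
    case False
    then show ?thesis
      using canopy_poly_roots_orthogonal[of K b n "of_real lam" "of_real mu"] lam mu equal
      unfolding n lessThan_Suc_atMost by simp
  qed
  then show ?thesis
    using equal K l2_inner_canopy_ef_same_layer[OF K s(2) s'(2), of b m j lam j' mu] by auto
qed

section \<open>The orthonormal eigenbasis\<close>

definition eigen_index :: "nat \<Rightarrow> real \<Rightarrow> (nat \<times> nat \<times> nat \<times> real) set" where
  "eigen_index K b = {(m, j, s, lam). 0 < s \<and> s < K \<and> poly (canopy_poly K b m) (of_real lam) = 0}"

definition eigvec :: "nat \<Rightarrow> real \<Rightarrow> nat \<times> nat \<times> nat \<times> real \<Rightarrow> canopy_vertex \<Rightarrow> complex" where
  "eigvec K b = (\<lambda>(m, j, s, lam) x. of_real (1 / sqrt (ef_norm_sq K b m lam)) * canopy_ef K b m j s lam x)"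

lemma eigvec_apply:
  "eigvec K b (m, j, s, lam) = (\<lambda>x. of_real (1 / sqrt (ef_norm_sq K b m lam)) * canopy_ef K b m j s lam x)"
  by (simp add: eigvec_def)

lemma finite_support_eigvec:
  assumes "K > 0"
  shows "finite {x. eigvec K b a x \<noteq> 0}"
proof -
  obtain m j s lam where a: "a = (m, j, s, lam)"
    using prod_cases4 by blast
  have "{x. eigvec K b a x \<noteq> 0} \<subseteq> subtree K m j"
  proof
    fix x
    assume "x \<in> {x. eigvec K b a x \<noteq> 0}"
    then show "x \<in> subtree K m j"
      using canopy_ef_outside_subtree[of x K m j b s lam] unfolding a eigvec_apply by auto
  qed
  then show ?thesis
    using finite_subtree[OF assms] by (rule finite_subset)
qed

lemma eigvec_in_l2: "K > 0 \<Longrightarrow> eigvec K b a \<in> l2"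
  by (rule l2_finite_support[OF finite_support_eigvec]) auto

lemma l2_inner_eigvec:
  assumes K: "K > 0" and "a \<in> eigen_index K b" "a' \<in> eigen_index K b"
  shows "l2_inner (eigvec K b a) (eigvec K b a') = (if a = a' then 1 else 0)"
proof -
  obtain m j s lam where a: "a = (m, j, s, lam)"
    using prod_cases4 by blast
  obtain m' j' s' mu where a': "a' = (m', j', s', mu)"
    using prod_cases4 by blast
  have s: "0 < s" "s < K" "poly (canopy_poly K b m) (of_real lam) = 0"
    and s': "0 < s'" "s' < K" "poly (canopy_poly K b m') (of_real mu) = 0"
    using assms(2,3) by (auto simp: eigen_index_def a a')
  have pos: "0 < ef_norm_sq K b m lam"
    using ef_norm_sq_pos[OF K canopy_poly_root_pos[OF s(3)]] .
  have "l2_inner (eigvec K b a) (eigvec K b a')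
      = of_real (1 / sqrt (ef_norm_sq K b m lam)) * of_real (1 / sqrt (ef_norm_sq K b m' mu))
        * (if a = a' then of_real (ef_norm_sq K b m lam) else 0)"
    unfolding a a' eigvec_apply l2_inner_cmult_left l2_inner_cmult_right
      l2_inner_canopy_ef_ef[OF K s(1,2) s'(1,2) s(3) s'(3)] by simp
  also have "\<dots> = (if a = a' then 1 else 0)"
  proof (cases "a = a'")
    case True
    have "sqrt (ef_norm_sq K b m lam) * sqrt (ef_norm_sq K b m lam) = ef_norm_sq K b m lam"
      using pos by simp
    then have "1 / sqrt (ef_norm_sq K b m lam) * (1 / sqrt (ef_norm_sq K b m lam)) * ef_norm_sq K b m lam = 1"
      using pos by (simp add: field_simps)
    moreover have "m' = m" "mu = lam"
      using True by (simp_all add: a a')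
    ultimately show ?thesis
      using True by (simp flip: of_real_mult)
  qed simp
  finally show ?thesis .
qed

lemma eigvec_is_eigenfunction:
  assumes K: "K > 0" and a: "a \<in> eigen_index K b"
  shows "is_eigenfunction (canopy_H K b) (eigvec K b a)"
proof -
  obtain m j s lam where a_eq: "a = (m, j, s, lam)"
    using prod_cases4 by blast
  have s: "0 < s" "s < K" and root: "poly (canopy_poly K b m) (of_real lam) = 0"
    using a by (auto simp: eigen_index_def a_eq)
  have "eigvec K b a \<noteq> (\<lambda>_. 0)"
  proof
    assume "eigvec K b a = (\<lambda>_. 0)"
    then have "l2_inner (eigvec K b a) (eigvec K b a) = 0"
      by (simp add: l2_inner_def)
    then show False
      using l2_inner_eigvec[OF K a a] by simp
  qed
  moreover have "canopy_H K b (eigvec K b a) = (\<lambda>x. of_real lam * eigvec K b a x)"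
    unfolding a_eq eigvec_apply canopy_H_scale canopy_H_ef[OF K s root] by (simp add: mult.left_commute)
  ultimately show ?thesis
    unfolding is_eigenfunction_def using eigvec_in_l2[OF K] by blast
qed

lemma l2_inner_canopy_ef_eq_0:
  assumes K: "K > 0" and orth: "\<forall>a\<in>eigen_index K b. l2_inner (eigvec K b a) \<psi> = 0"
    and s: "0 < s" "s < K" and root: "poly (canopy_poly K b m) (of_real lam) = 0"
  shows "l2_inner (canopy_ef K b m j s lam) \<psi> = 0"
proof -
  have "(m, j, s, lam) \<in> eigen_index K b"
    using s root by (simp add: eigen_index_def)
  then have "l2_inner (eigvec K b (m, j, s, lam)) \<psi> = 0"
    using orth by blast
  then have "cnj (of_real (1 / sqrt (ef_norm_sq K b m lam))) * l2_inner (canopy_ef K b m j s lam) \<psi> = 0"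
    unfolding eigvec_apply l2_inner_cmult_left .
  moreover have "0 < ef_norm_sq K b m lam"
    using ef_norm_sq_pos[OF K canopy_poly_root_pos[OF root]] .
  ultimately show ?thesis
    by simp
qed

lemma block_sum_branch_invariant:
  assumes K: "K > 0" and orth: "\<forall>a\<in>eigen_index K b. l2_inner (eigvec K b a) \<psi> = 0" and "r < K"
  shows "block_sum K \<psi> i e (K * j + r) = block_sum K \<psi> i e (K * j)"
proof -
  define m where "m = Suc (i + e)"
  have "i < m" "m - 1 - i = e"
    by (simp_all add: m_def)
  have coefficient: "(\<Sum>r<K. cnj ((unit_root K ^ s) ^ r) * block_sum K \<psi> i e (K * j + r)) = 0"
    if s: "0 < s" "s < K" for s
  proof -
    have "(\<Sum>r<K. cnj ((unit_root K ^ s) ^ r) * block_sum K \<psi> i (m - 1 - i) (K * j + r)) = 0"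
    proof (rule canopy_poly_combination_vanishing_on_roots[OF K _ \<open>i < m\<close>])
      fix lam :: real
      assume "poly (canopy_poly K b m) (of_real lam) = 0"
      from l2_inner_canopy_ef_eq_0[OF K orth s this]
      show "(\<Sum>i<m. poly (canopy_poly K b i) (of_real lam)
          * (\<Sum>r<K. cnj ((unit_root K ^ s) ^ r) * block_sum K \<psi> i (m - 1 - i) (K * j + r))) = 0"
        unfolding l2_inner_canopy_ef[OF K] .
    qed
    then show ?thesis
      unfolding \<open>m - 1 - i = e\<close> .
  qed
  show ?thesis
    using constant_if_fourier_coefficients_vanish[OF K coefficient \<open>r < K\<close>] by simp
qed

lemma layer_constant:
  assumes K: "K > 0"
    and branch_invariant: "\<And>e j r. r < K \<Longrightarrow> block_sum K \<psi> i e (K * j + r) = block_sum K \<psi> i e (K * j)"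
  shows "t div K ^ d = t' div K ^ d \<Longrightarrow> \<psi> (i, t) = \<psi> (i, t')"
proof (induction d arbitrary: t t')
  case 0
  then show ?case
    by simp
next
  case (Suc d)
  have block_sum_eq: "block_sum K \<psi> i d y = of_nat (K ^ d) * \<psi> (i, y * K ^ d)" for y
    unfolding block_sum_def
  proof (rule sum_block_const[OF K])
    fix u
    assume "u \<in> block K d y"
    then have "u div K ^ d = y * K ^ d div K ^ d"
      using K by (simp add: block_def)
    then show "\<psi> (i, u) = \<psi> (i, y * K ^ d)"
      by (rule Suc.IH)
  qed
  define c c' where "c = t div K ^ d" and "c' = t' div K ^ d"
  have "x div K ^ d div K = x div K ^ Suc d" for x :: nat
    by (metis div_mult2_eq power_Suc2)
  then have "c div K = c' div K"
    using Suc.prems unfolding c_def c'_def by simp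
  have "block_sum K \<psi> i d c = block_sum K \<psi> i d (K * (c div K))"
    using branch_invariant[of "c mod K" d "c div K"] K by simp
  also have "\<dots> = block_sum K \<psi> i d c'"
    using branch_invariant[of "c' mod K" d "c' div K"] K \<open>c div K = c' div K\<close> by simp
  finally have "\<psi> (i, c * K ^ d) = \<psi> (i, c' * K ^ d)"
    using K unfolding block_sum_eq by simp
  moreover have "\<psi> (i, t) = \<psi> (i, c * K ^ d)"
    by (rule Suc.IH) (use K in \<open>simp add: c_def\<close>)
  moreover have "\<psi> (i, c' * K ^ d) = \<psi> (i, t')"
    by (rule Suc.IH) (use K in \<open>simp add: c'_def\<close>)
  ultimately show ?case
    by simp
qed

lemma orthogonal_to_eigvecs_eq_0:
  assumes K: "K \<ge> 2" and "\<psi> \<in> l2" and orth: "\<forall>a\<in>eigen_index K b. l2_inner (eigvec K b a) \<psi> = 0"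
  shows "\<psi> = (\<lambda>_. 0)"
proof
  fix x :: canopy_vertex
  obtain i t where x: "x = (i, t)"
    by fastforce
  have "K > 0"
    using K by simp
  have layer: "\<psi> (i, u) = \<psi> (i, 0)" for u
  proof (rule layer_constant[OF \<open>K > 0\<close>])
    show "block_sum K \<psi> i e (K * j + r) = block_sum K \<psi> i e (K * j)" if "r < K" for e j r
      using block_sum_branch_invariant[OF \<open>K > 0\<close> orth that] .
    have "u < 2 ^ u"
      by (rule less_exp)
    also have "\<dots> \<le> K ^ u"
      using K by (intro power_mono) auto
    finally show "u div K ^ u = 0 div K ^ u"
      by simp
  qed
  have "infinite (range (Pair i :: nat \<Rightarrow> canopy_vertex))"
    using finite_imageD[of "Pair i" UNIV] by (auto simp: inj_on_def)
  then have "\<psi> (i, 0) = 0"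
    using l2_constant_on_infinite[OF \<open>\<psi> \<in> l2\<close>] layer by blast
  then show "\<psi> x = 0"
    using layer x by simp
qed

lemma orthonormal_basis_eigvecs:
  assumes "K \<ge> 2"
  shows "orthonormal_basis_l2 (eigvec K b ` eigen_index K b)"
proof -
  have K: "K > 0"
    using assms by simp
  have "l2_inner \<phi> \<psi> = (if \<phi> = \<psi> then 1 else 0)"
    if mem: "\<phi> \<in> eigvec K b ` eigen_index K b" "\<psi> \<in> eigvec K b ` eigen_index K b" for \<phi> \<psi>
  proof -
    obtain a a' where a: "a \<in> eigen_index K b" "\<phi> = eigvec K b a"
      and a': "a' \<in> eigen_index K b" "\<psi> = eigvec K b a'"
      using mem by blast
    show ?thesis
    proof (cases "\<phi> = \<psi>")
      case True
      then show ?thesis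
        using l2_inner_eigvec[OF K a(1) a(1)] a(2) by simp
    next
      case False
      then have "a \<noteq> a'"
        using a(2) a'(2) by blast
      then show ?thesis
        using l2_inner_eigvec[OF K a(1) a'(1)] a(2) a'(2) False by simp
    qed
  qed
  moreover have "eigvec K b ` eigen_index K b \<subseteq> l2"
    using eigvec_in_l2[OF K] by blast
  moreover have "\<psi> = (\<lambda>_. 0)"
    if "\<psi> \<in> l2" "\<forall>\<phi>\<in>eigvec K b ` eigen_index K b. l2_inner \<phi> \<psi> = 0" for \<psi>
    using orthogonal_to_eigvecs_eq_0[OF assms that(1)] that(2) by simp
  ultimately show ?thesis
    unfolding orthonormal_basis_l2_def by blast
qed

theorem theorem1p4:
  fixes K :: nat and b :: real
  assumes "K \<ge> 2"
  shows "pure_point_spectrum (canopy_H K b) \<and>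
    (\<exists>E. orthonormal_basis_l2 E \<and>
       (\<forall>\<phi>\<in>E. is_eigenfunction (canopy_H K b) \<phi> \<and> finite {x. \<phi> x \<noteq> 0}))"
proof -
  have K: "K > 0"
    using assms by simp
  have "pure_point_spectrum (canopy_H K b)"
    unfolding pure_point_spectrum_def
  proof (intro ballI impI)
    fix \<psi> :: "canopy_vertex \<Rightarrow> complex"
    assume "\<psi> \<in> l2" and "\<forall>\<phi>. is_eigenfunction (canopy_H K b) \<phi> \<longrightarrow> l2_inner \<phi> \<psi> = 0"
    then show "\<psi> = (\<lambda>_. 0)"
      using orthogonal_to_eigvecs_eq_0[OF assms] eigvec_is_eigenfunction[OF K] by blast
  qed
  moreover have "\<forall>\<phi>\<in>eigvec K b ` eigen_index K b.
      is_eigenfunction (canopy_H K b) \<phi> \<and> finite {x. \<phi> x \<noteq> 0}"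
    using eigvec_is_eigenfunction[OF K] finite_support_eigvec[OF K] by blast
  ultimately show ?thesis
    using orthonormal_basis_eigvecs[OF assms] by blast
qed

end
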